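(* (Selection theorem.) Let $S\colon[0,1]\to\mathfrak S_1(\mathbb T)$ be a continuous path with $S(0)=\mathbf 1$. Then there exists a sequence of continuous functions $z_j\colon[0,1]\to\mathbb T$, $j=1,2,\dots$, such that $z_j(0)=1$ for all $j$ and, for every $r\in[0,1]$, the sequence $(z_1(r),z_2(r),\dots)$ is an enumeration of $S(r)$.
   Context: A rigged subset $S$ of a set $X$ assigns to each $x\in X$ a multiplicity $\mathrm{mult}(x;S)\in\{0,1,2,\dots,\infty\}$; an enumeration of a countable rigged set is a sequence in which each $x$ appears exactly $\mathrm{mult}(x;S)$ times. For a metric space $X$ with base point $x_0$, $\mathfrak S_\infty(X)$ is the set of countable rigged subsets of $X$ in which $x_0$ has multiplicity $\infty$ and which have no accumulation point other than $x_0$ (an accumulation point being a point every neighbourhood of which contains infinitely many elements counting multiplicity). For $S,T\in\mathfrak S_\infty(X)$, $d(S,T)=\inf\sum_{j}\mathrm{dist}(s_j,t_j)$ over all enumerations $(s_j)$, $(t_j)$ of $S$ and $T$. $\mathbf x_0$ denotes the rigged set consisting only of $x_0$ with infinite multiplicity, and $\mathfrak S_1(X)=\{S\in\mathfrak S_\infty(X):d(S,\mathbf x_0)<\infty\}$, a metric space with metric $d$. Here $X=\mathbb T$ (unit circle, arc-length metric) with base point $1$, so $\mathbf 1$ is the rigged set with only the point $1$ of infinite multiplicity. *)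

theory Defs
  imports "HOL-Analysis.Analysis"
begin

definition circle :: "complex set" where
  "circle = {z. cmod z = 1}"

definition arcdist :: "complex \<Rightarrow> complex \<Rightarrow> real" where
  "arcdist z w = \<bar>Arg (z / w)\<bar>"

text \<open>A rigged subset of the circle is represented by its multiplicity function.\<close>
type_synonym rigged = "complex \<Rightarrow> enat"

definition occ :: "(nat \<Rightarrow> complex) \<Rightarrow> complex \<Rightarrow> enat" where
  "occ s x = (if finite {j. s j = x} then enat (card {j. s j = x}) else \<infinity>)"

definition enumeration :: "rigged \<Rightarrow> (nat \<Rightarrow> complex) \<Rightarrow> bool" where
  "enumeration S s \<longleftrightarrow> (\<forall>x. occ s x = S x)"

definition accum_point :: "rigged \<Rightarrow> complex \<Rightarrow> bool" where
  "accum_point S x \<longleftrightarrow> x \<in> circle \<and>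
     (\<forall>e>0. infinite {y \<in> circle. arcdist x y < e \<and> S y \<noteq> 0}
            \<or> (\<exists>y \<in> circle. arcdist x y < e \<and> S y = \<infinity>))"

definition S_inf :: "rigged set" where
  "S_inf = {S. (\<forall>x. x \<notin> circle \<longrightarrow> S x = 0) \<and> countable {x. S x \<noteq> 0}
              \<and> S 1 = \<infinity> \<and> (\<forall>x. accum_point S x \<longrightarrow> x = 1)}"

definition rdist :: "rigged \<Rightarrow> rigged \<Rightarrow> ennreal" where
  "rdist S T = (INF st \<in> {(s, t). enumeration S s \<and> enumeration T t}.
                  (\<Sum>j. ennreal (arcdist (fst st j) (snd st j))))"

definition one_rigged :: rigged where
  "one_rigged = (\<lambda>x. if x = 1 then \<infinity> else 0)"

definition S_one :: "rigged set" where
  "S_one = {S \<in> S_inf. rdist S one_rigged < \<infinity>}"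

end

theory Submission
  imports Defs
begin

(*
  Away from the base point, a point of S_1(T) has finitely many points, with finite
  multiplicities, on every closed arc avoiding 1.  Cut the circle at an angle c carrying no
  points.  The points after the cut, listed by increasing angle, sit at the order statistics of
  the counting function t \<mapsto> #(S \<inter> arc (c, t]), and if S and S' have enumerations matched
  within distance e, their counting functions are comparable up to a shift by e, so every order
  statistic moves by less than e.  Treating the points before the cut the same way in the mirror
  image and interleaving with infinitely many copies of 1 gives an enumeration that depends
  continuously on S.  A cut free for S(r0) stays free for S(r) with r close to r0, which yields
  continuous enumerations over short parameter intervals.  Two enumerations of the same rigged
  set differ by a permutation of the indices, so such local enumerations can be glued, and
  compactness of [0, 1] finishes the proof.
*)

section \<open>Angular coordinate on the circle\<close>

text \<open>\<open>angle x \<in> (0, 2 * pi]\<close>, so that the base point sits at the right end: \<open>angle 1 = 2 * pi\<close>.\<close>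
definition angle :: "complex \<Rightarrow> real" where
  "angle x = Arg (- x) + pi"

lemma angle_gt_0: "0 < angle x" and angle_le_2pi: "angle x \<le> 2 * pi"
  using mpi_less_Arg[of "-x"] Arg_le_pi[of "-x"] by (auto simp: angle_def)

lemma cis_in_circle: "cis a \<in> circle"
  by (simp add: circle_def)

lemma cnj_in_circle: "x \<in> circle \<Longrightarrow> cnj x \<in> circle"
  by (simp add: circle_def)

lemma one_in_circle: "1 \<in> circle"
  by (simp add: circle_def)

lemma cis_angle:
  assumes "x \<in> circle" shows "cis (angle x) = x"
proof -
  have "cmod (- x) = 1"
    using assms by (simp add: circle_def)
  then have "cis (Arg (- x)) = sgn (- x)"
    by (intro cis_Arg) auto
  also have "\<dots> = - x"
    using \<open>cmod (- x) = 1\<close> by (simp add: sgn_div_norm)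
  finally have "cis (Arg (- x)) = - x" .
  then show ?thesis
    by (simp add: angle_def flip: cis_mult)
qed

lemma angle_cis:
  assumes "0 < a" "a \<le> 2 * pi" shows "angle (cis a) = a"
proof -
  have "- cis a = cis (a - pi)"
    by (simp flip: cis_divide)
  then show ?thesis
    using assms by (simp add: angle_def Arg_cis)
qed

lemma angle_1: "angle 1 = 2 * pi"
  using angle_cis[of "2 * pi"] by simp

lemma angle_inj: "x \<in> circle \<Longrightarrow> y \<in> circle \<Longrightarrow> angle x = angle y \<Longrightarrow> x = y"
  by (metis cis_angle)

lemma angle_less_2pi: "x \<in> circle \<Longrightarrow> x \<noteq> 1 \<Longrightarrow> angle x < 2 * pi"
  by (metis angle_1 angle_inj angle_le_2pi one_in_circle less_eq_real_def)

lemma angle_cnj: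
  assumes "x \<in> circle" "x \<noteq> 1" shows "angle (cnj x) = 2 * pi - angle x"
proof -
  have "cnj x = cis (- angle x)"
    using cis_cnj[of "angle x"] cis_angle[OF assms(1)] by simp
  also have "\<dots> = cis (2 * pi - angle x)"
    using cis_divide[of "2 * pi" "angle x"] cis_divide[of 0 "angle x"] by simp
  finally have "cnj x = cis (2 * pi - angle x)" .
  then show ?thesis
    using angle_gt_0[of x] angle_less_2pi[OF assms] by (simp add: angle_cis)
qed

lemma Arg_cis_mod_2pi: "\<exists>k::int. Arg (cis d) = d - of_int k * (2 * pi)"
  using Arg_exp_diff_2pi[of "\<i> * complex_of_real d"] by (metis Im_i_times Re_complex_of_real cis_conv_exp)

lemma abs_Arg_cis_le: "\<bar>Arg (cis d)\<bar> \<le> \<bar>d\<bar>"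
proof -
  obtain k :: int where k: "Arg (cis d) = d - of_int k * (2 * pi)"
    using Arg_cis_mod_2pi by blast
  have "\<bar>Arg (cis d)\<bar> \<le> pi"
    using mpi_less_Arg[of "cis d"] Arg_le_pi[of "cis d"] by linarith
  moreover have "2 * pi \<le> \<bar>of_int k * (2 * pi)\<bar>" if "k \<noteq> 0"
    using that by (simp add: abs_mult)
  ultimately show ?thesis
    using k by (cases "k = 0") (simp, linarith)
qed

lemma arcdist_cis_le: "arcdist (cis a) (cis b) \<le> \<bar>a - b\<bar>"
  unfolding arcdist_def cis_divide by (rule abs_Arg_cis_le)

lemma arcdist_nonneg: "0 \<le> arcdist x y"
  by (simp add: arcdist_def)

lemma arcdist_commute: "arcdist x y = arcdist y x"
  by (metis Arg_inverse abs_minus_cancel arcdist_def inverse_divide)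

lemma arcdist_cnj: "arcdist (cnj x) (cnj y) = arcdist x y"
  by (metis Arg_cnj abs_minus_cancel arcdist_def complex_cnj_divide)

lemma angle_diff_if_arcdist_less:
  assumes "x \<in> circle" "y \<in> circle" "arcdist x y < e" "e \<le> pi"
  shows "\<bar>angle x - angle y\<bar> < e \<or> 2 * pi - e < \<bar>angle x - angle y\<bar>"
proof -
  define d where "d = angle x - angle y"
  have "x / y = cis d"
    using assms(1,2) by (simp add: d_def cis_angle flip: cis_divide)
  then have arg: "\<bar>Arg (cis d)\<bar> < e"
    using assms(3) by (simp add: arcdist_def)
  obtain k :: int where k: "Arg (cis d) = d - of_int k * (2 * pi)"
    using Arg_cis_mod_2pi by blast
  have d: "\<bar>d\<bar> < 2 * pi"
    using angle_gt_0[of x] angle_le_2pi[of x] angle_gt_0[of y] angle_le_2pi[of y] by (simp add: d_def)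
  have dk: "\<bar>d - of_int k * (2 * pi)\<bar> < e"
    using arg k by simp
  consider "k = 0" | "k = 1" | "k = -1" | "2 \<le> \<bar>k\<bar>"
    by linarith
  then have "\<bar>d\<bar> < e \<or> 2 * pi - e < \<bar>d\<bar>"
  proof cases
    case 4
    then have "2 * (2 * pi) \<le> \<bar>of_int k * (2 * pi)\<bar>"
      by (simp add: abs_mult mult_right_mono)
    then show ?thesis
      using dk d assms(4) by linarith
  qed (use dk d assms(4) in \<open>simp; linarith\<close>)+
  then show ?thesis
    by (simp add: d_def)
qed

section \<open>Counting with multiplicity\<close>

definition ecard :: "'a set \<Rightarrow> enat" where
  "ecard A = (if finite A then enat (card A) else \<infinity>)"

lemma sum_enat_neq_infinity:
  "finite A \<Longrightarrow> (\<And>y. y \<in> A \<Longrightarrow> f y \<noteq> (\<infinity>::enat)) \<Longrightarrow> sum f A \<noteq> \<infinity>"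
  by (induction A rule: finite_induct) (auto simp: plus_eq_infty_iff_enat)

definition count_in :: "rigged \<Rightarrow> complex set \<Rightarrow> enat" where
  "count_in S A =
     (if finite {x \<in> A. S x \<noteq> 0} then (\<Sum>x \<in> {x \<in> A. S x \<noteq> 0}. S x) else \<infinity>)"

lemma ecard_Un_disjoint: "A \<inter> B = {} \<Longrightarrow> ecard (A \<union> B) = ecard A + ecard B"
  by (auto simp: ecard_def card_Un_disjoint)

lemma ecard_mono: "A \<subseteq> B \<Longrightarrow> ecard A \<le> ecard B"
  by (auto simp: ecard_def card_mono dest: finite_subset)

lemma ecard_image: "inj_on f A \<Longrightarrow> ecard (f ` A) = ecard A"
  by (simp add: ecard_def card_image finite_image_iff)

lemma ecard_eq_imp_bij_betw:
  fixes A B :: "nat set"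
  assumes "ecard A = ecard B"
  obtains f where "bij_betw f A B"
proof (cases "finite A")
  case True
  then have "finite B" "card A = card B"
    using assms by (auto simp: ecard_def split: if_splits)
  then show ?thesis
    using True finite_same_card_bij that by blast
next
  case False
  then have "infinite B"
    using assms by (auto simp: ecard_def split: if_splits)
  then show ?thesis
    using bij_betw_trans[OF bij_betw_inv_into[OF bij_enumerate[OF False]] bij_enumerate] that
    by blast
qed

lemma occ_eq_ecard: "occ s x = ecard {j. s j = x}"
  by (simp add: occ_def ecard_def)

lemma occ_eq_0_iff: "occ s x = 0 \<longleftrightarrow> (\<forall>j. s j \<noteq> x)"
  by (auto simp: occ_def zero_enat_def dest: not_finite_existsD)

lemma occ_cnj: "occ (\<lambda>j. cnj (s j)) x = occ s (cnj x)"
proof -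
  have "{j. cnj (s j) = x} = {j. s j = cnj x}"
    by auto
  then show ?thesis
    by (simp add: occ_eq_ecard)
qed

lemma occ_comp_bij:
  assumes "bij p" shows "occ (\<lambda>j. s (p j)) x = occ s x"
proof -
  have "{j. s (p j) = x} = p -` {k. s k = x}"
    by auto
  moreover have "p ` (p -` {k. s k = x}) = {k. s k = x}"
    using assms by (metis bij_def surj_image_vimage_eq)
  moreover have "inj_on p (p -` {k. s k = x})"
    using assms by (metis bij_def inj_on_subset subset_UNIV)
  ultimately show ?thesis
    by (metis ecard_image occ_eq_ecard)
qed

lemma ecard_preimage_finite: "finite P \<Longrightarrow> ecard {j. s j \<in> P} = (\<Sum>x\<in>P. occ s x)"
proof (induction P rule: finite_induct)
  case empty
  then show ?case by (simp add: ecard_def zero_enat_def)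
next
  case (insert x P)
  have "{j. s j \<in> insert x P} = {j. s j = x} \<union> {j. s j \<in> P}"
    by auto
  then show ?case
    using insert by (simp add: ecard_Un_disjoint occ_eq_ecard disjoint_iff)
qed

lemma enumeration_nonzero: "enumeration S s \<Longrightarrow> S (s j) \<noteq> 0"
  by (metis enumeration_def occ_eq_0_iff)

lemma enumeration_cnj: "enumeration S s \<Longrightarrow> enumeration (\<lambda>x. S (cnj x)) (\<lambda>j. cnj (s j))"
  by (simp add: enumeration_def occ_cnj)

lemma enumeration_comp_bij: "enumeration S s \<Longrightarrow> bij p \<Longrightarrow> enumeration S (\<lambda>j. s (p j))"
  by (simp add: enumeration_def occ_comp_bij)

lemma ecard_enumeration_preimage:
  assumes "enumeration S s"
  shows "ecard {j. s j \<in> A} = count_in S A"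
proof -
  define P where "P = {x \<in> A. S x \<noteq> 0}"
  have occ: "occ s x = S x" for x
    using assms by (simp add: enumeration_def)
  have preimage: "{j. s j \<in> A} = {j. s j \<in> P}"
    using enumeration_nonzero[OF assms] by (auto simp: P_def)
  show ?thesis
  proof (cases "finite P")
    case True
    then show ?thesis
      using preimage ecard_preimage_finite[OF True, of s] by (simp add: count_in_def occ flip: P_def)
  next
    case False
    have "P \<subseteq> s ` {j. s j \<in> P}"
    proof
      fix x assume x: "x \<in> P"
      then have "occ s x \<noteq> 0"
        using occ by (simp add: P_def)
      then obtain j where "s j = x"
        using occ_eq_0_iff by blast
      then show "x \<in> s ` {j. s j \<in> P}"
        using x by blast
    qed
    then have "infinite {j. s j \<in> P}"
      using False finite_surj by blast
    then show ?thesis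
      using False preimage by (simp add: ecard_def count_in_def P_def)
  qed
qed

lemma enumerations_differ_by_bij:
  assumes s: "enumeration S s" and t: "enumeration S t"
  obtains p where "bij p" "\<And>j. t (p j) = s j"
proof -
  have "\<exists>f. bij_betw f {j. s j = x} {j. t j = x}" for x
  proof -
    have "ecard {j. s j = x} = ecard {j. t j = x}"
      using s t by (simp add: enumeration_def flip: occ_eq_ecard)
    then show ?thesis
      by (rule ecard_eq_imp_bij_betw) blast
  qed
  then obtain f where f: "\<And>x. bij_betw (f x) {j. s j = x} {j. t j = x}"
    by metis
  define p where "p j = f (s j) j" for j
  have tp: "t (p j) = s j" for j
    using bij_betwE[OF f[of "s j"]] by (simp add: p_def)
  have "inj p"
  proof (rule injI)
    fix i j assume "p i = p j"
    then have "s i = s j"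
      using tp by metis
    moreover have "f (s i) i = f (s i) j"
      using \<open>p i = p j\<close> \<open>s i = s j\<close> by (simp add: p_def)
    ultimately show "i = j"
      using inj_onD[OF bij_betw_imp_inj_on[OF f[of "s i"]]] by simp
  qed
  moreover have "k \<in> range p" for k
  proof -
    obtain j where "s j = t k" "k = f (t k) j"
      using bij_betw_imp_surj_on[OF f[of "t k"]] by (metis (mono_tags) imageE mem_Collect_eq)
    then show ?thesis
      by (metis p_def rangeI)
  qed
  then have "surj p"
    by blast
  ultimately show ?thesis
    using that tp by (simp add: bij_def)
qed

lemma count_in_mono:
  assumes "A \<subseteq> B" shows "count_in S A \<le> count_in S B"
proof (cases "finite {x \<in> B. S x \<noteq> 0}")
  case True
  moreover have "{x \<in> A. S x \<noteq> 0} \<subseteq> {x \<in> B. S x \<noteq> 0}"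
    using assms by auto
  ultimately show ?thesis
    by (simp add: count_in_def sum_mono2 finite_subset)
qed (simp add: count_in_def)

lemma count_in_cong: "{x \<in> A. S x \<noteq> 0} = {x \<in> B. S x \<noteq> 0} \<Longrightarrow> count_in S A = count_in S B"
  by (simp add: count_in_def)

definition interleave :: "(nat \<Rightarrow> 'a) \<Rightarrow> (nat \<Rightarrow> 'a) \<Rightarrow> nat \<Rightarrow> 'a" where
  "interleave a b j = (if even j then a (j div 2) else b (j div 2))"

lemma occ_interleave: "occ (interleave a b) x = occ a x + occ b x"
proof -
  have "{j. interleave a b j = x} = (\<lambda>k. 2 * k) ` {k. a k = x} \<union> (\<lambda>k. 2 * k + 1) ` {k. b k = x}"
  proof (intro set_eqI iffI)
    fix j assume "j \<in> {j. interleave a b j = x}"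
    then show "j \<in> (\<lambda>k. 2 * k) ` {k. a k = x} \<union> (\<lambda>k. 2 * k + 1) ` {k. b k = x}"
      by (cases "even j") (auto simp: interleave_def elim!: evenE oddE)
  qed (auto simp: interleave_def)
  moreover have "(\<lambda>k. 2 * k) ` {k. a k = x} \<inter> (\<lambda>k. 2 * k + 1) ` {k. b k = x} = {}"
    by auto presburger
  moreover have "inj_on (\<lambda>k::nat. 2 * k) A" "inj_on (\<lambda>k::nat. 2 * k + 1) A" for A
    by (auto simp: inj_on_def)
  ultimately show ?thesis
    by (simp add: occ_eq_ecard ecard_Un_disjoint ecard_image)
qed

section \<open>Matched enumerations and regular rigged sets\<close>

definition enum_close :: "rigged \<Rightarrow> rigged \<Rightarrow> real \<Rightarrow> bool" where
  "enum_close S T e \<longleftrightarrow>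
     (\<exists>s t. enumeration S s \<and> enumeration T t \<and> (\<forall>j. arcdist (s j) (t j) < e))"

lemma enum_close_if_rdist_less:
  assumes "rdist S T < ennreal e" shows "enum_close S T e"
proof -
  obtain s t where st: "enumeration S s" "enumeration T t"
    and sum: "(\<Sum>j. ennreal (arcdist (s j) (t j))) < ennreal e"
    using assms unfolding rdist_def INF_less_iff by auto
  have "arcdist (s j) (t j) < e" for j
    using ennreal_suminf_lessD[OF sum, of j] arcdist_nonneg ennreal_less_iff by blast
  then show ?thesis
    using st unfolding enum_close_def by blast
qed

lemma enum_close_commute: "enum_close S T e \<Longrightarrow> enum_close T S e"
  unfolding enum_close_def by (metis arcdist_commute)

lemma enum_close_cnj: "enum_close S T e \<Longrightarrow> enum_close (\<lambda>x. S (cnj x)) (\<lambda>x. T (cnj x)) e"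
  unfolding enum_close_def by (metis enumeration_cnj arcdist_cnj)

lemma enum_close_imp_near:
  assumes "enum_close S T e" "S x \<noteq> 0"
  obtains y where "T y \<noteq> 0" "arcdist x y < e"
proof -
  obtain s t where st: "enumeration S s" "enumeration T t" "\<forall>j. arcdist (s j) (t j) < e"
    using assms(1) enum_close_def by blast
  have "occ s x \<noteq> 0"
    using st(1) assms(2) by (simp add: enumeration_def)
  then obtain j where "s j = x"
    using occ_eq_0_iff by blast
  then show ?thesis
    using that st enumeration_nonzero by metis
qed

definition close_continuous_on :: "real set \<Rightarrow> (real \<Rightarrow> rigged) \<Rightarrow> bool" where
  "close_continuous_on I S \<longleftrightarrow>
     (\<forall>r\<in>I. \<forall>e>0. \<exists>\<delta>>0. \<forall>r'\<in>I. \<bar>r' - r\<bar> < \<delta> \<longrightarrow> enum_close (S r') (S r) e)"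

lemma close_continuous_on_subset:
  "close_continuous_on J S \<Longrightarrow> I \<subseteq> J \<Longrightarrow> close_continuous_on I S"
  unfolding close_continuous_on_def by (meson subsetD)

lemma close_continuous_on_cnj:
  "close_continuous_on I S \<Longrightarrow> close_continuous_on I (\<lambda>r x. S r (cnj x))"
  unfolding close_continuous_on_def using enum_close_cnj by meson

definition regular_rigged :: "rigged \<Rightarrow> bool" where
  "regular_rigged S \<longleftrightarrow> (\<forall>x. x \<notin> circle \<longrightarrow> S x = 0) \<and> S 1 = \<infinity> \<and> (\<forall>x. x \<noteq> 1 \<longrightarrow> S x \<noteq> \<infinity>) \<and>
     (\<forall>a b. 0 < a \<longrightarrow> b < 2 * pi \<longrightarrow> finite {x \<in> circle. S x \<noteq> 0 \<and> a \<le> angle x \<and> angle x \<le> b})"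

lemma regular_rigged_in_circle: "regular_rigged S \<Longrightarrow> S x \<noteq> 0 \<Longrightarrow> x \<in> circle"
  by (auto simp: regular_rigged_def)

lemma regular_rigged_finite_arc:
  "regular_rigged S \<Longrightarrow> 0 < a \<Longrightarrow> b < 2 * pi \<Longrightarrow>
     finite {x \<in> circle. S x \<noteq> 0 \<and> a \<le> angle x \<and> angle x \<le> b}"
  by (simp add: regular_rigged_def)

lemma accum_point_if_infinite_arc:
  assumes "0 < a" "b < 2 * pi"
    and inf: "infinite {x \<in> circle. S x \<noteq> 0 \<and> a \<le> angle x \<and> angle x \<le> b}"
  obtains x where "x \<noteq> 1" "accum_point S x"
proof -
  define P where "P = {x \<in> circle. S x \<noteq> 0 \<and> a \<le> angle x \<and> angle x \<le> b}"
  have "inj_on angle P"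
    by (auto simp: P_def inj_on_def angle_inj)
  then have "infinite (angle ` P)"
    using inf finite_image_iff unfolding P_def by blast
  moreover have "angle ` P \<subseteq> {a..b}"
    by (auto simp: P_def)
  ultimately obtain p where p: "p \<in> {a..b}" "p islimpt (angle ` P)"
    using compact_eq_Bolzano_Weierstrass[of "{a..b}"] by auto
  have "accum_point S (cis p)"
    unfolding accum_point_def
  proof (intro conjI allI impI disjI1)
    show "cis p \<in> circle"
      by (rule cis_in_circle)
    fix e :: real assume "e > 0"
    define Q where "Q = {y \<in> P. angle y \<in> ball p e}"
    have "angle ` Q = angle ` P \<inter> ball p e"
      by (auto simp: Q_def)
    then have "infinite Q"
      using p(2) \<open>e > 0\<close> islimpt_eq_infinite_ball by (metis finite_imageI)
    moreover have "Q \<subseteq> {y \<in> circle. arcdist (cis p) y < e \<and> S y \<noteq> 0}"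
    proof
      fix y assume y: "y \<in> Q"
      then have "y \<in> circle" "S y \<noteq> 0" "\<bar>p - angle y\<bar> < e"
        by (auto simp: Q_def P_def dist_real_def)
      moreover have "arcdist (cis p) y \<le> \<bar>p - angle y\<bar>"
        using arcdist_cis_le[of p "angle y"] cis_angle[OF \<open>y \<in> circle\<close>] by simp
      ultimately show "y \<in> {y \<in> circle. arcdist (cis p) y < e \<and> S y \<noteq> 0}"
        by simp
    qed
    ultimately show "infinite {y \<in> circle. arcdist (cis p) y < e \<and> S y \<noteq> 0}"
      using finite_subset by blast
  qed
  moreover have "cis p \<noteq> 1"
    using p assms angle_cis[of p] angle_1 by auto
  ultimately show ?thesis
    using that by blast
qed

lemma S_inf_regular_rigged:
  assumes "S \<in> S_inf" shows "regular_rigged S"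
proof -
  have acc: "\<And>x. accum_point S x \<Longrightarrow> x = 1"
    using assms by (simp add: S_inf_def)
  have "S x \<noteq> \<infinity>" if "x \<noteq> 1" for x
  proof
    assume "S x = \<infinity>"
    moreover from this have "x \<in> circle"
      using assms by (auto simp: S_inf_def)
    moreover from calculation have "arcdist x x = 0"
      by (auto simp: arcdist_def circle_def)
    ultimately have "accum_point S x"
      unfolding accum_point_def by force
    then show False
      using acc that by blast
  qed
  moreover have "finite {x \<in> circle. S x \<noteq> 0 \<and> a \<le> angle x \<and> angle x \<le> b}"
    if ab: "0 < a" "b < 2 * pi" for a b
  proof (rule ccontr)
    assume "infinite {x \<in> circle. S x \<noteq> 0 \<and> a \<le> angle x \<and> angle x \<le> b}"
    then obtain x where "x \<noteq> 1" "accum_point S x"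
      by (rule accum_point_if_infinite_arc[OF ab])
    then show False
      using acc by blast
  qed
  ultimately show ?thesis
    using assms by (simp add: regular_rigged_def S_inf_def)
qed

lemma regular_rigged_cnj:
  assumes "regular_rigged S" shows "regular_rigged (\<lambda>x. S (cnj x))"
proof -
  have "finite {x \<in> circle. S (cnj x) \<noteq> 0 \<and> a \<le> angle x \<and> angle x \<le> b}"
    if "0 < a" "b < 2 * pi" for a b
  proof -
    have "{x \<in> circle. S (cnj x) \<noteq> 0 \<and> a \<le> angle x \<and> angle x \<le> b}
          \<subseteq> cnj ` {y \<in> circle. S y \<noteq> 0 \<and> 2 * pi - b \<le> angle y \<and> angle y \<le> 2 * pi - a}"
    proof
      fix x assume x: "x \<in> {x \<in> circle. S (cnj x) \<noteq> 0 \<and> a \<le> angle x \<and> angle x \<le> b}"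
      then have "x \<noteq> 1"
        using angle_1 that by auto
      then have "angle (cnj x) = 2 * pi - angle x"
        using angle_cnj x by auto
      then show "x \<in> cnj ` {y \<in> circle. S y \<noteq> 0 \<and> 2 * pi - b \<le> angle y \<and> angle y \<le> 2 * pi - a}"
        using x cnj_in_circle by (auto intro!: image_eqI[of x cnj "cnj x"])
    qed
    then show ?thesis
      using regular_rigged_finite_arc[OF assms, of "2 * pi - b" "2 * pi - a"] that finite_subset
      by auto
  qed
  moreover have "cnj x \<notin> circle" if "x \<notin> circle" for x
    using that by (simp add: circle_def)
  moreover have "cnj x \<noteq> 1" if "x \<noteq> 1" for x
    using that by (auto simp: complex_eq_iff)
  ultimately show ?thesis
    using assms unfolding regular_rigged_def by simp
qed

section \<open>Order statistics of a counting function\<close>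

definition order_stat :: "(real \<Rightarrow> enat) \<Rightarrow> nat \<Rightarrow> real" where
  "order_stat F k = Inf {t. enat k < F t}"

text \<open>\<open>F t\<close> counts, with multiplicity, the points of a discrete configuration in \<open>(c, t]\<close>;
  then \<open>order_stat F k\<close> is the position of the \<open>k\<close>-th point (counting from \<open>0\<close>).\<close>
locale counting_function =
  fixes F :: "real \<Rightarrow> enat" and c B :: real
  assumes F_mono: "t \<le> t' \<Longrightarrow> F t \<le> F t'"
    and F_start: "F c = 0"
    and F_stop: "F B = \<infinity>"
    and locally_constant_right: "\<exists>\<eta>>0. \<forall>t'. t \<le> t' \<longrightarrow> t' < t + \<eta> \<longrightarrow> F t' \<le> F t"
begin

lemma bdd_below_exceeding: "bdd_below {t. enat k < F t}"
proof (rule bdd_belowI)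
  fix t assume "t \<in> {t. enat k < F t}"
  then have "F c < F t"
    using F_start le_less_trans[of 0 "enat k" "F t"] by (simp add: zero_enat_def)
  then show "c \<le> t"
    using F_mono[of t c] by (cases "c \<le> t") auto
qed

lemma order_stat_le: "enat k < F t \<Longrightarrow> order_stat F k \<le> t"
  unfolding order_stat_def by (rule cInf_lower) (auto intro: bdd_below_exceeding)

lemma less_count_order_stat: "enat k < F (order_stat F k)"
proof (rule ccontr)
  define u where "u = order_stat F k"
  assume "\<not> enat k < F (order_stat F k)"
  then have Fu: "F u \<le> enat k"
    by (simp add: u_def not_less)
  obtain \<eta> where \<eta>: "\<eta> > 0" "\<And>t'. u \<le> t' \<Longrightarrow> t' < u + \<eta> \<Longrightarrow> F t' \<le> F u"
    using locally_constant_right by blast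
  have "u + \<eta> \<le> Inf {t. enat k < F t}"
  proof (rule cInf_greatest)
    show "{t. enat k < F t} \<noteq> {}"
      using F_stop by (auto intro!: exI[of _ B])
    fix t assume t: "t \<in> {t. enat k < F t}"
    then have "u \<le> t"
      using order_stat_le u_def by auto
    show "u + \<eta> \<le> t"
    proof (rule ccontr)
      assume "\<not> u + \<eta> \<le> t"
      then have "F t \<le> F u"
        using \<eta>(2) \<open>u \<le> t\<close> by simp
      then show False
        using t Fu by simp
    qed
  qed
  then show False
    using \<eta> by (simp add: u_def order_stat_def)
qed

lemma order_stat_le_iff: "order_stat F k \<le> t \<longleftrightarrow> enat k < F t"
  using order_stat_le less_count_order_stat F_mono less_le_trans by blast

lemma order_stat_gt_start: "c < order_stat F k"
proof -
  obtain \<eta> where \<eta>: "\<eta> > 0" "\<And>t'. c \<le> t' \<Longrightarrow> t' < c + \<eta> \<Longrightarrow> F t' \<le> F c"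
    using locally_constant_right by blast
  have "F t \<le> F c" if "t < c + \<eta>" for t
    using \<eta>(2)[of t] F_mono[of t c] that by (cases "c \<le> t") auto
  moreover have "\<not> F (order_stat F k) \<le> F c"
    using le_less_trans[OF zero_le less_count_order_stat[of k]] F_start by simp
  ultimately have "c + \<eta> \<le> order_stat F k"
    by (meson not_le)
  then show ?thesis
    using \<eta>(1) by simp
qed

lemma order_stat_le_stop: "order_stat F k \<le> B"
  using order_stat_le F_stop by simp

lemma order_stat_eq_jump:
  assumes "a' < a" and below: "\<And>t. a' \<le> t \<Longrightarrow> t < a \<Longrightarrow> F t = enat m"
    and at: "F a = enat (m + n)"
  shows "{k. order_stat F k = a} = {m..<m + n}"
proof (intro set_eqI iffI)
  fix k assume "k \<in> {k. order_stat F k = a}"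
  then have "enat k < F a" "\<not> enat k < F a'"
    using order_stat_le_iff[of k a] order_stat_le_iff[of k a'] \<open>a' < a\<close> by auto
  then show "k \<in> {m..<m + n}"
    using at below[of a'] \<open>a' < a\<close> by simp
next
  fix k assume k: "k \<in> {m..<m + n}"
  have "order_stat F k \<le> a" "a' < order_stat F k"
    using order_stat_le_iff[of k a] order_stat_le_iff[of k a'] at below[of a'] \<open>a' < a\<close> k
    by auto
  moreover have "F (order_stat F k) \<noteq> enat m"
    using less_count_order_stat[of k] k by auto
  ultimately have "order_stat F k = a"
    using below[of "order_stat F k"] by fastforce
  then show "k \<in> {k. order_stat F k = a}"
    by simp
qed

end

lemma order_stat_shift:
  assumes "counting_function F c B" "counting_function G c' B'" "\<And>t. G t \<le> F (t + e)"
  shows "order_stat F k \<le> order_stat G k + e"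
proof -
  have "enat k < G (order_stat G k)"
    using assms(2) by (rule counting_function.less_count_order_stat)
  also have "\<dots> \<le> F (order_stat G k + e)"
    by (rule assms(3))
  finally show ?thesis
    by (rule counting_function.order_stat_le[OF assms(1)])
qed

section \<open>Counting along an arc\<close>

definition angle_range :: "real \<Rightarrow> real \<Rightarrow> complex set" where
  "angle_range c t = {x \<in> circle. x \<noteq> 1 \<and> c < angle x \<and> angle x \<le> t}"

text \<open>Once the order statistics run past the last point before \<open>2 * pi\<close>, they sit at the base
  point \<open>1 = cis (2 * pi)\<close>, whose multiplicity is infinite anyway.\<close>
definition arc_count :: "rigged \<Rightarrow> real \<Rightarrow> real \<Rightarrow> enat" where
  "arc_count S c t = (if t < 2 * pi then count_in S (angle_range c t) else \<infinity>)"

definition arc_points :: "rigged \<Rightarrow> real \<Rightarrow> nat \<Rightarrow> complex" where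
  "arc_points S c k = cis (order_stat (arc_count S c) k)"

lemma finite_arc_support:
  assumes "regular_rigged S" "0 < c" "t < 2 * pi"
  shows "finite {x \<in> angle_range c t. S x \<noteq> 0}"
proof -
  have "{x \<in> angle_range c t. S x \<noteq> 0} \<subseteq> {x \<in> circle. S x \<noteq> 0 \<and> c \<le> angle x \<and> angle x \<le> t}"
    by (auto simp: angle_range_def)
  then show ?thesis
    using regular_rigged_finite_arc[OF assms] finite_subset by blast
qed

lemma arc_count_locally_constant_right:
  assumes S: "regular_rigged S" and "0 < c" "t < 2 * pi"
  obtains \<eta> where "\<eta> > 0" "\<And>t'. t \<le> t' \<Longrightarrow> t' < t + \<eta> \<Longrightarrow> arc_count S c t' = arc_count S c t"
proof -
  define m where "m = (t + 2 * pi) / 2"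
  have m: "t < m" "m < 2 * pi"
    using assms(3) by (auto simp: m_def)
  have "finite (angle ` {x \<in> angle_range c m. S x \<noteq> 0})"
    using finite_arc_support[OF S \<open>0 < c\<close> m(2)] by blast
  then obtain \<delta> where \<delta>: "\<delta> > 0"
    "\<And>\<theta>. \<theta> \<in> angle ` {x \<in> angle_range c m. S x \<noteq> 0} \<Longrightarrow> \<theta> \<noteq> t \<Longrightarrow> \<delta> \<le> dist t \<theta>"
    using finite_set_avoid by meson
  define \<eta> where "\<eta> = min \<delta> (m - t)"
  have "arc_count S c t' = arc_count S c t" if t': "t \<le> t'" "t' < t + \<eta>" for t'
  proof -
    have "{x \<in> angle_range c t'. S x \<noteq> 0} = {x \<in> angle_range c t. S x \<noteq> 0}"
    proof (intro set_eqI iffI)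
      fix x assume x: "x \<in> {x \<in> angle_range c t'. S x \<noteq> 0}"
      then have "angle x \<in> angle ` {x \<in> angle_range c m. S x \<noteq> 0}"
        using t' by (auto simp: angle_range_def \<eta>_def)
      then have "angle x \<le> t"
        using \<delta>(2)[of "angle x"] x t' by (force simp: angle_range_def \<eta>_def dist_real_def)
      then show "x \<in> {x \<in> angle_range c t. S x \<noteq> 0}"
        using x by (auto simp: angle_range_def)
    qed (use t' in \<open>auto simp: angle_range_def\<close>)
    moreover have "t' < 2 * pi"
      using t' m by (simp add: \<eta>_def)
    ultimately show ?thesis
      using t' m by (simp add: arc_count_def count_in_cong[of "angle_range c t'" S "angle_range c t"])
  qed
  moreover have "\<eta> > 0"
    using \<delta>(1) m(1) by (simp add: \<eta>_def)
  ultimately show ?thesis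
    using that by blast
qed

lemma counting_function_arc_count:
  assumes S: "regular_rigged S" and c: "0 < c" "c < 2 * pi"
  shows "counting_function (arc_count S c) c (2 * pi)"
proof
  show "arc_count S c t \<le> arc_count S c t'" if "t \<le> t'" for t t'
    using that by (auto simp: arc_count_def angle_range_def intro!: count_in_mono)
  have "angle_range c c = {}"
    by (auto simp: angle_range_def)
  then show "arc_count S c c = 0"
    using c by (simp add: arc_count_def count_in_def)
  show "arc_count S c (2 * pi) = \<infinity>"
    by (simp add: arc_count_def)
  show "\<exists>\<eta>>0. \<forall>t'. t \<le> t' \<longrightarrow> t' < t + \<eta> \<longrightarrow> arc_count S c t' \<le> arc_count S c t" for t
  proof (cases "t < 2 * pi")
    case True
    then show ?thesis
      using arc_count_locally_constant_right[OF S c(1)] by (metis order_refl)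
  qed (auto simp: arc_count_def intro: exI[of _ 1])
qed

lemma arc_support_left_of_point:
  assumes S: "regular_rigged S" and c: "0 < c" and x: "x \<in> circle" "x \<noteq> 1" "c < angle x"
  obtains a' where "a' < angle x" "\<And>t. a' \<le> t \<Longrightarrow> t < angle x \<Longrightarrow>
    {y \<in> angle_range c t. S y \<noteq> 0} = {y \<in> angle_range c (angle x). S y \<noteq> 0} - {x}"
proof -
  define P where "P = {y \<in> angle_range c (angle x). S y \<noteq> 0}"
  have "finite P"
    unfolding P_def using finite_arc_support[OF S c angle_less_2pi[OF x(1,2)]] .
  then obtain \<delta> where \<delta>: "\<delta> > 0"
    "\<And>\<theta>. \<theta> \<in> angle ` P \<Longrightarrow> \<theta> \<noteq> angle x \<Longrightarrow> \<delta> \<le> dist (angle x) \<theta>"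
    using finite_set_avoid[of "angle ` P" "angle x"] by blast
  define a' where "a' = max c (angle x - \<delta>)"
  have "{y \<in> angle_range c t. S y \<noteq> 0} = P - {x}" if t: "a' \<le> t" "t < angle x" for t
  proof (intro set_eqI iffI)
    fix y assume y: "y \<in> P - {x}"
    then have "angle y \<noteq> angle x"
      using angle_inj x(1) by (auto simp: P_def angle_range_def)
    then have "angle y \<le> a'"
      using \<delta>(2)[of "angle y"] y by (auto simp: P_def angle_range_def a'_def dist_real_def)
    then show "y \<in> {y \<in> angle_range c t. S y \<noteq> 0}"
      using y t by (auto simp: P_def angle_range_def)
  qed (use t in \<open>auto simp: P_def angle_range_def\<close>)
  moreover have "a' < angle x"
    using \<delta>(1) x(3) by (simp add: a'_def)
  ultimately show ?thesis
    using that by (simp add: P_def)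
qed

lemma arc_count_jump:
  assumes S: "regular_rigged S" and c: "0 < c" and x: "x \<in> circle" "x \<noteq> 1" "c < angle x"
  obtains a' m n where "a' < angle x" "\<And>t. a' \<le> t \<Longrightarrow> t < angle x \<Longrightarrow> arc_count S c t = enat m"
    "arc_count S c (angle x) = enat (m + n)" "S x = enat n"
proof -
  define a where "a = angle x"
  have a: "a < 2 * pi"
    using angle_less_2pi x by (simp add: a_def)
  define P where "P = {y \<in> angle_range c a. S y \<noteq> 0}"
  have "finite P"
    unfolding P_def using finite_arc_support[OF S c a] .
  obtain a' where a': "a' < a"
    and support: "\<And>t. a' \<le> t \<Longrightarrow> t < a \<Longrightarrow> {y \<in> angle_range c t. S y \<noteq> 0} = P - {x}"
    using arc_support_left_of_point[OF S c x] unfolding P_def a_def by blast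
  have "(\<Sum>y\<in>P - {x}. S y) \<noteq> \<infinity>"
    using \<open>finite P\<close> S by (intro sum_enat_neq_infinity) (auto simp: regular_rigged_def P_def angle_range_def)
  then obtain m where m: "(\<Sum>y\<in>P - {x}. S y) = enat m"
    by auto
  obtain n where n: "S x = enat n"
    using S x by (metis enat.exhaust regular_rigged_def)
  have "arc_count S c t = enat m" if "a' \<le> t" "t < a" for t
    using support[OF that] \<open>finite P\<close> a that m by (simp add: arc_count_def count_in_def)
  moreover have "(\<Sum>y\<in>P. S y) = enat (m + n)"
  proof (cases "S x = 0")
    case True
    then have "P - {x} = P"
      by (auto simp: P_def)
    then show ?thesis
      using m n True by (simp add: zero_enat_def)
  next
    case False
    then have "x \<in> P"
      using x by (simp add: P_def angle_range_def a_def)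
    then show ?thesis
      using m n \<open>finite P\<close> by (simp add: sum.remove)
  qed
  then have "arc_count S c a = enat (m + n)"
    using a \<open>finite P\<close> by (simp add: arc_count_def count_in_def P_def)
  ultimately show ?thesis
    using that a' n by (simp add: a_def)
qed

section \<open>Enumerating a rigged set cut open at a gap\<close>

lemma occ_arc_points:
  assumes S: "regular_rigged S" and c: "0 < c" "c < 2 * pi" and x: "x \<in> circle" "x \<noteq> 1"
  shows "occ (arc_points S c) x = (if c < angle x then S x else 0)"
proof -
  interpret counting_function "arc_count S c" c "2 * pi"
    using counting_function_arc_count[OF S c] .
  have "{k. arc_points S c k = x} = {k. order_stat (arc_count S c) k = angle x}"
  proof -
    have "0 < order_stat (arc_count S c) k" "order_stat (arc_count S c) k \<le> 2 * pi" for k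
      using order_stat_gt_start[of k] order_stat_le_stop[of k] c by auto
    then show ?thesis
      using angle_cis cis_angle[OF x(1)] unfolding arc_points_def by metis
  qed
  moreover have "{k. order_stat (arc_count S c) k = angle x} = {}" if "\<not> c < angle x"
  proof -
    have "order_stat (arc_count S c) k \<noteq> angle x" for k
      using order_stat_gt_start[of k] that by linarith
    then show ?thesis
      by blast
  qed
  moreover have "ecard {k. order_stat (arc_count S c) k = angle x} = S x" if above: "c < angle x"
  proof -
    obtain a' m n where "a' < angle x"
      "\<And>t. a' \<le> t \<Longrightarrow> t < angle x \<Longrightarrow> arc_count S c t = enat m"
      "arc_count S c (angle x) = enat (m + n)" "S x = enat n"
      by (rule arc_count_jump[OF S c(1) x above]) blast
    then show ?thesis
      using order_stat_eq_jump by (simp add: ecard_def)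
  qed
  ultimately show ?thesis
    by (simp add: occ_eq_ecard ecard_def zero_enat_def)
qed

text \<open>The points before the cut are listed, by decreasing angle, as the mirror image of the points
  beyond \<open>2 * pi - c\<close>.\<close>
definition cut_enumeration :: "rigged \<Rightarrow> real \<Rightarrow> nat \<Rightarrow> complex" where
  "cut_enumeration S c =
     interleave (arc_points S c)
       (interleave (\<lambda>k. cnj (arc_points (\<lambda>y. S (cnj y)) (2 * pi - c) k)) (\<lambda>_. 1))"

lemma enumeration_cut_enumeration:
  assumes S: "regular_rigged S" and c: "0 < c" "c < 2 * pi"
    and cut: "\<And>y. y \<in> circle \<Longrightarrow> y \<noteq> 1 \<Longrightarrow> angle y = c \<Longrightarrow> S y = 0"
  shows "enumeration S (cut_enumeration S c)"
  unfolding enumeration_def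
proof
  fix x
  have occ: "occ (cut_enumeration S c) x =
      occ (arc_points S c) x + occ (arc_points (\<lambda>y. S (cnj y)) (2 * pi - c)) (cnj x) + occ (\<lambda>_. 1) x"
    by (simp add: cut_enumeration_def occ_interleave occ_cnj add.assoc)
  consider "x = 1" | "x \<notin> circle" | "x \<in> circle" "x \<noteq> 1"
    by blast
  then show "occ (cut_enumeration S c) x = S x"
  proof cases
    case 1
    then show ?thesis
      using occ S by (simp add: regular_rigged_def occ_def)
  next
    case 2
    then have "cnj x \<notin> circle" "x \<noteq> 1"
      using one_in_circle by (auto simp: circle_def)
    then have "occ (arc_points S c) x = 0" "occ (arc_points (\<lambda>y. S (cnj y)) (2 * pi - c)) (cnj x) = 0"
        "occ (\<lambda>_. 1) x = 0"
      using 2 cis_in_circle unfolding occ_eq_0_iff arc_points_def by metis+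
    then show ?thesis
      using occ 2 S by (simp add: regular_rigged_def)
  next
    case 3
    have "occ (arc_points (\<lambda>y. S (cnj y)) (2 * pi - c)) (cnj x) = (if angle x < c then S x else 0)"
      using occ_arc_points[OF regular_rigged_cnj[OF S], of "2 * pi - c" "cnj x"] c 3
        angle_cnj[OF 3] cnj_in_circle by (auto simp: complex_eq_iff)
    moreover have "occ (\<lambda>_. 1) x = 0"
      using 3 by (simp add: occ_def zero_enat_def)
    ultimately show ?thesis
      using occ occ_arc_points[OF S c 3] cut[OF 3] by auto
  qed
qed

section \<open>Continuous dependence on the rigged set\<close>

definition angle_gap :: "rigged \<Rightarrow> real \<Rightarrow> real \<Rightarrow> bool" where
  "angle_gap S c w \<longleftrightarrow> (\<forall>y\<in>circle. y \<noteq> 1 \<longrightarrow> \<bar>angle y - c\<bar> < w \<longrightarrow> S y = 0)"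

lemma angle_gap_cnj:
  assumes "angle_gap S c w" shows "angle_gap (\<lambda>y. S (cnj y)) (2 * pi - c) w"
  unfolding angle_gap_def
proof (intro ballI impI)
  fix y assume y: "y \<in> circle" "y \<noteq> 1" and "\<bar>angle y - (2 * pi - c)\<bar> < w"
  then have "\<bar>angle (cnj y) - c\<bar> < w"
    using angle_cnj[OF y] by linarith
  moreover have "cnj y \<noteq> 1"
    using y(2) by (auto simp: complex_eq_iff)
  ultimately show "S (cnj y) = 0"
    using assms cnj_in_circle[OF y(1)] by (simp add: angle_gap_def)
qed

lemma arc_count_le_shift:
  assumes close: "enum_close T S e" and S: "regular_rigged S" and gap: "angle_gap S c w"
    and e: "0 < e" "e \<le> w" and w: "w \<le> c" "c + w \<le> 2 * pi" "w \<le> pi"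
  shows "arc_count T c t \<le> arc_count S c (t + e)"
proof (cases "t + e < 2 * pi")
  case True
  obtain s q where sq: "enumeration T s" "enumeration S q" "\<And>j. arcdist (s j) (q j) < e"
    using close enum_close_def by blast
  have "q j \<in> angle_range c (t + e)" if "s j \<in> angle_range c t" for j
  proof -
    have s: "s j \<in> circle" "c < angle (s j)" "angle (s j) \<le> t"
      using that by (auto simp: angle_range_def)
    have "S (q j) \<noteq> 0"
      using enumeration_nonzero[OF sq(2)] .
    then have q: "q j \<in> circle"
      using regular_rigged_in_circle[OF S] by blast
    have "\<bar>angle (s j) - angle (q j)\<bar> < e \<or> 2 * pi - e < \<bar>angle (s j) - angle (q j)\<bar>"
      using angle_diff_if_arcdist_less[OF s(1) q sq(3)[of j]] e w by linarith
    then have d: "\<bar>angle (s j) - angle (q j)\<bar> < e"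
      using s True e w angle_gt_0[of "q j"] angle_le_2pi[of "q j"] by linarith
    then have "q j \<noteq> 1"
      using True s angle_1 by auto
    moreover have "c < angle (q j)"
    proof (rule ccontr)
      assume "\<not> c < angle (q j)"
      then have "\<bar>angle (q j) - c\<bar> < w"
        using d s e by linarith
      then show False
        using gap q \<open>q j \<noteq> 1\<close> \<open>S (q j) \<noteq> 0\<close> by (simp add: angle_gap_def)
    qed
    ultimately show ?thesis
      using q d s by (auto simp: angle_range_def)
  qed
  then have "ecard {j. s j \<in> angle_range c t} \<le> ecard {j. q j \<in> angle_range c (t + e)}"
    by (intro ecard_mono) blast
  then show ?thesis
    using ecard_enumeration_preimage[OF sq(1)] ecard_enumeration_preimage[OF sq(2)] True e
    by (simp add: arc_count_def)
qed (simp add: arc_count_def)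

lemma continuous_on_arc_points:
  assumes S: "\<forall>r\<in>I. regular_rigged (S r)" and gap: "\<forall>r\<in>I. angle_gap (S r) c w"
    and cont: "close_continuous_on I S"
    and w: "0 < w" "w \<le> c" "c + w \<le> 2 * pi" "w \<le> pi"
  shows "continuous_on I (\<lambda>r. arc_points (S r) c k)"
proof -
  have c: "0 < c" "c < 2 * pi"
    using w by auto
  have counting: "counting_function (arc_count (S r) c) c (2 * pi)" if "r \<in> I" for r
    using counting_function_arc_count S c that by blast
  have "continuous_on I (\<lambda>r. order_stat (arc_count (S r) c) k)"
    unfolding continuous_on_iff
  proof (intro ballI allI impI)
    fix r \<epsilon> :: real assume r: "r \<in> I" and "\<epsilon> > 0"
    define e where "e = min (\<epsilon> / 2) w"
    have e: "0 < e" "e \<le> w" "e < \<epsilon>"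
      using \<open>\<epsilon> > 0\<close> w by (auto simp: e_def)
    then obtain \<delta> where "\<delta> > 0" and \<delta>: "\<And>r'. r' \<in> I \<Longrightarrow> \<bar>r' - r\<bar> < \<delta> \<Longrightarrow> enum_close (S r') (S r) e"
      using cont r unfolding close_continuous_on_def by meson
    have "dist (order_stat (arc_count (S r') c) k) (order_stat (arc_count (S r) c) k) < \<epsilon>"
      if r': "r' \<in> I" "dist r' r < \<delta>" for r'
    proof -
      have close: "enum_close (S r') (S r) e"
        using \<delta> r' by (simp add: dist_real_def)
      have "order_stat (arc_count (S r) c) k \<le> order_stat (arc_count (S r') c) k + e"
        using order_stat_shift[OF counting counting] arc_count_le_shift[OF close] S gap r r' e w
        by blast
      moreover have "order_stat (arc_count (S r') c) k \<le> order_stat (arc_count (S r) c) k + e"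
        using order_stat_shift[OF counting counting] arc_count_le_shift[OF enum_close_commute[OF close]]
          S gap r r' e w
        by blast
      ultimately show ?thesis
        using e by (simp add: dist_real_def abs_le_iff)
    qed
    then show "\<exists>d>0. \<forall>r'\<in>I. dist r' r < d \<longrightarrow>
        dist (order_stat (arc_count (S r') c) k) (order_stat (arc_count (S r) c) k) < \<epsilon>"
      using \<open>\<delta> > 0\<close> by blast
  qed
  then show ?thesis
    unfolding arc_points_def by (intro continuous_intros)
qed

definition continuous_enumeration :: "(real \<Rightarrow> rigged) \<Rightarrow> real set \<Rightarrow> (nat \<Rightarrow> real \<Rightarrow> complex) \<Rightarrow> bool" where
  "continuous_enumeration S I z \<longleftrightarrow>
     (\<forall>j. continuous_on I (z j)) \<and> (\<forall>r\<in>I. enumeration (S r) (\<lambda>j. z j r))"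

lemma continuous_enumeration_if_angle_gap:
  assumes S: "\<forall>r\<in>I. regular_rigged (S r)" and gap: "\<forall>r\<in>I. angle_gap (S r) c w"
    and cont: "close_continuous_on I S"
    and w: "0 < w" "w \<le> c" "c + w \<le> 2 * pi" "w \<le> pi"
  shows "continuous_enumeration S I (\<lambda>j r. cut_enumeration (S r) c j)"
  unfolding continuous_enumeration_def
proof (intro conjI allI ballI)
  fix r assume "r \<in> I"
  then show "enumeration (S r) (\<lambda>j. cut_enumeration (S r) c j)"
    using enumeration_cut_enumeration[of "S r" c] S gap w by (force simp: angle_gap_def)
next
  fix j
  have "continuous_on I (\<lambda>r. arc_points (S r) c k)" for k
    using continuous_on_arc_points[OF S gap cont w] .
  moreover have "continuous_on I (\<lambda>r. arc_points (\<lambda>y. S r (cnj y)) (2 * pi - c) k)" for k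
    using continuous_on_arc_points[of I "\<lambda>r y. S r (cnj y)" "2 * pi - c" w]
      S gap cont w regular_rigged_cnj angle_gap_cnj close_continuous_on_cnj
    by auto
  ultimately show "continuous_on I (\<lambda>r. cut_enumeration (S r) c j)"
    unfolding cut_enumeration_def interleave_def
    by (cases "even j"; cases "even (j div 2)") (auto intro!: continuous_intros)
qed

section \<open>From local to global\<close>

lemma regular_rigged_angle_gap:
  assumes S: "regular_rigged S" and ab: "0 < a" "a < b" "b < 2 * pi"
  obtains c w where "0 < w" "a \<le> c - w" "c + w \<le> b" "angle_gap S c w"
proof -
  define \<Theta> where "\<Theta> = angle ` {x \<in> circle. S x \<noteq> 0 \<and> a \<le> angle x \<and> angle x \<le> b}"
  have "finite \<Theta>"
    using regular_rigged_finite_arc[OF S ab(1,3)] by (simp add: \<Theta>_def)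
  moreover have "infinite {a<..<b}"
    using ab(2) by simp
  ultimately obtain c where c: "c \<in> {a<..<b}" "c \<notin> \<Theta>"
    by (meson finite_subset subsetI)
  obtain \<delta> where \<delta>: "\<delta> > 0" "\<And>\<theta>. \<theta> \<in> \<Theta> \<Longrightarrow> \<theta> \<noteq> c \<Longrightarrow> \<delta> \<le> dist c \<theta>"
    using finite_set_avoid[OF \<open>finite \<Theta>\<close>, of c] by blast
  define w where "w = min \<delta> (min (c - a) (b - c))"
  have "angle_gap S c w"
    unfolding angle_gap_def
  proof (intro ballI impI)
    fix y assume y: "y \<in> circle" "y \<noteq> 1" "\<bar>angle y - c\<bar> < w"
    show "S y = 0"
    proof (rule ccontr)
      assume "S y \<noteq> 0"
      then have "angle y \<in> \<Theta>"
        using y c by (auto simp: \<Theta>_def w_def)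
      then have "angle y \<noteq> c"
        using c(2) by blast
      then show False
        using \<delta>(2)[OF \<open>angle y \<in> \<Theta>\<close>] y(3) by (auto simp: w_def dist_real_def)
    qed
  qed
  moreover have "0 < w" "a \<le> c - w" "c + w \<le> b"
    using \<delta>(1) c(1) by (auto simp: w_def)
  ultimately show ?thesis
    using that by blast
qed

lemma angle_gap_if_enum_close:
  assumes gap: "angle_gap S c (w + e)" and close: "enum_close T S e" and S: "regular_rigged S"
    and bounds: "e \<le> pi" "e \<le> c - w" "c + w + e \<le> 2 * pi"
  shows "angle_gap T c w"
  unfolding angle_gap_def
proof (intro ballI impI)
  fix y assume y: "y \<in> circle" "y \<noteq> 1" "\<bar>angle y - c\<bar> < w"
  show "T y = 0"
  proof (rule ccontr)
    assume "T y \<noteq> 0"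
    then obtain y' where "S y' \<noteq> 0" "arcdist y y' < e"
      using enum_close_imp_near[OF close] by blast
    moreover from this have y': "y' \<in> circle"
      using regular_rigged_in_circle[OF S] by blast
    ultimately have "\<bar>angle y - angle y'\<bar> < e \<or> 2 * pi - e < \<bar>angle y - angle y'\<bar>"
      using angle_diff_if_arcdist_less[OF y(1)] bounds by blast
    then have "\<bar>angle y' - c\<bar> < w + e"
      using y(3) bounds angle_gt_0[of y'] angle_le_2pi[of y'] by linarith
    moreover have "y' \<noteq> 1"
      using calculation bounds angle_1 by auto
    ultimately show False
      using gap y' \<open>S y' \<noteq> 0\<close> by (simp add: angle_gap_def)
  qed
qed

lemma continuous_enumeration_near:
  assumes S: "\<forall>r\<in>J. regular_rigged (S r)" and cont: "close_continuous_on J S" and "r0 \<in> J"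
  obtains \<delta> where "\<delta> > 0" "\<And>I. I \<subseteq> J \<inter> ball r0 \<delta> \<Longrightarrow> \<exists>z. continuous_enumeration S I z"
proof -
  have "regular_rigged (S r0)" "0 < pi / 2" "pi / 2 < 3 * pi / 2" "3 * pi / 2 < 2 * pi"
    using S \<open>r0 \<in> J\<close> pi_gt_zero by auto
  then obtain c w where w: "0 < w" "pi / 2 \<le> c - w" "c + w \<le> 3 * pi / 2"
    and gap: "angle_gap (S r0) c w"
    by (rule regular_rigged_angle_gap)
  obtain \<delta> where "\<delta> > 0" and \<delta>: "\<And>r. r \<in> J \<Longrightarrow> \<bar>r - r0\<bar> < \<delta> \<Longrightarrow> enum_close (S r) (S r0) (w / 2)"
    using cont \<open>r0 \<in> J\<close> w(1) unfolding close_continuous_on_def by (meson half_gt_zero)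
  have "\<exists>z. continuous_enumeration S I z" if I: "I \<subseteq> J \<inter> ball r0 \<delta>" for I
  proof -
    have "angle_gap (S r) c (w / 2)" if "r \<in> I" for r
      using angle_gap_if_enum_close[of "S r0" c "w / 2" "w / 2" "S r"] gap \<delta> S I that \<open>r0 \<in> J\<close> w
        pi_gt_zero
      by (force simp: dist_real_def)
    moreover have "\<forall>r\<in>I. regular_rigged (S r)" "close_continuous_on I S"
      using S I close_continuous_on_subset[OF cont] by auto
    ultimately have "continuous_enumeration S I (\<lambda>j r. cut_enumeration (S r) c j)"
      using continuous_enumeration_if_angle_gap[of I S c "w / 2"] w by auto
    then show ?thesis
      by blast
  qed
  then show ?thesis
    using that \<open>\<delta> > 0\<close> by blast
qed

lemma continuous_enumeration_glue:
  assumes z: "continuous_enumeration S {a..b} z" and y: "continuous_enumeration S {b..c} y"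
    and "a \<le> b" "b \<le> c"
  obtains x where "continuous_enumeration S {a..c} x"
proof -
  have "enumeration (S b) (\<lambda>j. z j b)" "enumeration (S b) (\<lambda>j. y j b)"
    using z y \<open>a \<le> b\<close> \<open>b \<le> c\<close> by (simp_all add: continuous_enumeration_def)
  then obtain p where p: "bij p" "\<And>j. y (p j) b = z j b"
    using enumerations_differ_by_bij by blast
  define x where "x j r = (if r \<le> b then z j r else y (p j) r)" for j r
  have "continuous_on {a..c} (x j)" for j
    unfolding x_def
  proof (rule continuous_on_cases_le[where h = "\<lambda>r. r" and a = b])
    have "{r \<in> {a..c}. r \<le> b} = {a..b}" "{r \<in> {a..c}. b \<le> r} = {b..c}"
      using \<open>a \<le> b\<close> \<open>b \<le> c\<close> by auto
    then show "continuous_on {r \<in> {a..c}. r \<le> b} (z j)" "continuous_on {r \<in> {a..c}. b \<le> r} (y (p j))"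
      using z y by (simp_all add: continuous_enumeration_def)
  qed (use p(2) in \<open>auto intro: continuous_on_id\<close>)
  moreover have "enumeration (S r) (\<lambda>j. x j r)" if "r \<in> {a..c}" for r
  proof (cases "r \<le> b")
    case True
    then show ?thesis
      using z that by (simp add: continuous_enumeration_def x_def)
  next
    case False
    then have "enumeration (S r) (\<lambda>j. y j r)"
      using y that by (simp add: continuous_enumeration_def)
    then show ?thesis
      using enumeration_comp_bij[OF _ p(1)] False by (simp add: x_def)
  qed
  ultimately show ?thesis
    using that unfolding continuous_enumeration_def by blast
qed

text \<open>The Lebesgue number of the cover by the given neighbourhoods provides a uniform step.\<close>
lemma interval_relation_local_to_global:
  fixes P :: "real \<Rightarrow> real \<Rightarrow> bool"
  assumes "a \<le> b"
    and local: "\<And>r. r \<in> {a..b} \<Longrightarrow>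
      \<exists>\<delta>>0. \<forall>u v. a \<le> u \<longrightarrow> u \<le> v \<longrightarrow> v \<le> b \<longrightarrow> {u..v} \<subseteq> ball r \<delta> \<longrightarrow> P u v"
    and trans: "\<And>u v w. P u v \<Longrightarrow> P v w \<Longrightarrow> u \<le> v \<Longrightarrow> v \<le> w \<Longrightarrow> P u w"
  shows "P a b"
proof -
  obtain \<delta> where \<delta>: "\<And>r. r \<in> {a..b} \<Longrightarrow> \<delta> r > 0 \<and>
      (\<forall>u v. a \<le> u \<longrightarrow> u \<le> v \<longrightarrow> v \<le> b \<longrightarrow> {u..v} \<subseteq> ball r (\<delta> r) \<longrightarrow> P u v)"
    using local by metis
  have cover: "{a..b} \<subseteq> \<Union>((\<lambda>r. ball r (\<delta> r)) ` {a..b})"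
  proof
    fix r assume "r \<in> {a..b}"
    then show "r \<in> \<Union>((\<lambda>r. ball r (\<delta> r)) ` {a..b})"
      using \<delta> by (intro UN_I) auto
  qed
  obtain \<epsilon> where "\<epsilon> > 0"
    and \<epsilon>: "\<And>x. x \<in> {a..b} \<Longrightarrow> \<exists>G \<in> (\<lambda>r. ball r (\<delta> r)) ` {a..b}. ball x \<epsilon> \<subseteq> G"
    using Heine_Borel_lemma[OF compact_Icc cover] by blast
  have short: "P u v" if uv: "a \<le> u" "u \<le> v" "v \<le> b" "v - u < \<epsilon>" for u v
  proof -
    obtain r where "r \<in> {a..b}" "ball u \<epsilon> \<subseteq> ball r (\<delta> r)"
      using \<epsilon>[of u] uv by auto
    moreover have "{u..v} \<subseteq> ball u \<epsilon>"
      using uv by (auto simp: dist_real_def)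
    ultimately show ?thesis
      using \<delta> uv by blast
  qed
  have "P a (min b (a + real n * \<epsilon> / 2))" for n
  proof (induction n)
    case 0
    show ?case
      using short[of a a] \<open>a \<le> b\<close> \<open>\<epsilon> > 0\<close> by simp
  next
    case (Suc n)
    have "min b (a + real n * \<epsilon> / 2) \<le> min b (a + real (Suc n) * \<epsilon> / 2)"
      "min b (a + real (Suc n) * \<epsilon> / 2) - min b (a + real n * \<epsilon> / 2) < \<epsilon>"
      using \<open>\<epsilon> > 0\<close> by (auto simp: min_def field_simps)
    then show ?case
      using trans[OF Suc short] \<open>a \<le> b\<close> \<open>\<epsilon> > 0\<close> by (simp add: min_def)
  qed
  moreover obtain n :: nat where "real n > 2 * (b - a) / \<epsilon>"
    using reals_Archimedean2 by blast
  then have "min b (a + real n * \<epsilon> / 2) = b"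
    using \<open>\<epsilon> > 0\<close> by (simp add: field_simps)
  ultimately show ?thesis
    by metis
qed

lemma continuous_enumeration_on_interval:
  assumes S: "\<forall>r\<in>{a..b}. regular_rigged (S r)" and cont: "close_continuous_on {a..b} S"
    and "a \<le> b"
  obtains z where "continuous_enumeration S {a..b} z"
proof -
  have "\<exists>z. continuous_enumeration S {a..b} z"
  proof (rule interval_relation_local_to_global)
    fix r :: real assume "r \<in> {a..b}"
    then obtain \<delta> where "\<delta> > 0" "\<And>I. I \<subseteq> {a..b} \<inter> ball r \<delta> \<Longrightarrow> \<exists>z. continuous_enumeration S I z"
      using continuous_enumeration_near[OF S cont] by blast
    then show "\<exists>\<delta>>0. \<forall>u v. a \<le> u \<longrightarrow> u \<le> v \<longrightarrow> v \<le> b \<longrightarrow> {u..v} \<subseteq> ball r \<delta> \<longrightarrow>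
        (\<exists>z. continuous_enumeration S {u..v} z)"
      by (metis atLeastatMost_subset_iff le_inf_iff)
  next
    fix u v w :: real
    assume "\<exists>z. continuous_enumeration S {u..v} z" "\<exists>z. continuous_enumeration S {v..w} z"
      and "u \<le> v" "v \<le> w"
    then show "\<exists>z. continuous_enumeration S {u..w} z"
      by (metis continuous_enumeration_glue)
  qed fact
  then show ?thesis
    using that by blast
qed

theorem mainTheorem4:
  fixes S :: "real \<Rightarrow> rigged"
  assumes "\<forall>r \<in> {0..1}. S r \<in> S_one"
    and "\<forall>r \<in> {0..1}. \<forall>e>0. \<exists>\<delta>>0. \<forall>r' \<in> {0..1}. \<bar>r' - r\<bar> < \<delta> \<longrightarrow> rdist (S r') (S r) < ennreal e"
    and "S 0 = one_rigged"
  shows "\<exists>z :: nat \<Rightarrow> real \<Rightarrow> complex.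
           (\<forall>j. continuous_on {0..1} (z j) \<and> z j ` {0..1} \<subseteq> circle \<and> z j 0 = 1)
         \<and> (\<forall>r \<in> {0..1}. enumeration (S r) (\<lambda>j. z j r))"
proof -
  have regular: "\<forall>r\<in>{0..1}. regular_rigged (S r)"
    using assms(1) S_inf_regular_rigged by (simp add: S_one_def)
  have "close_continuous_on {0..1} S"
    using assms(2) enum_close_if_rdist_less unfolding close_continuous_on_def by meson
  then obtain z where "continuous_enumeration S {0..1} z"
    using continuous_enumeration_on_interval[OF regular] by auto
  then have z: "\<forall>j. continuous_on {0..1} (z j)" "\<And>r. r \<in> {0..1} \<Longrightarrow> enumeration (S r) (\<lambda>j. z j r)"
    by (simp_all add: continuous_enumeration_def)
  have nonzero: "S r (z j r) \<noteq> 0" if "r \<in> {0..1}" for r j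
    using enumeration_nonzero[OF z(2)[OF that]] .
  then have "z j ` {0..1} \<subseteq> circle" for j
    using regular regular_rigged_in_circle by blast
  moreover have "z j 0 = 1" for j
    using nonzero[of 0 j] assms(3) by (auto simp: one_rigged_def split: if_splits)
  ultimately show ?thesis
    using z by blast
qed

end
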